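(* Let $\mathbf p=(p_i)_{i\in\mathbb N}$ and $\mathbf q=(q_i)_{i\in\mathbb N}$ be sequences with $p_i,q_i\ge 0$ for all $i$ and $\sum_i p_i=\sum_i q_i=1$. Let $H(\mathbf p)=-\sum_{i\in\mathbb N}p_i\ln p_i$ (with the convention $0\ln 0=0$), and define $H(\mathbf q)$ similarly. Assume that for some $c\in(0,1/3)$, $$|p_i-q_i|\le c\,q_i\quad\text{for all } i=1,2,\dots.$$ Then $$H(\mathbf p)\le (1+c)H(\mathbf q)+c\ln 3.$$ *)

theory Defs
  imports "HOL-Analysis.Analysis"
begin

text \<open>Shannon entropy (natural log) of a probability sequence on the naturals,
  as an extended non-negative real so that infinite entropy is allowed.
  In Isabelle ln 0 = 0, so 0 * ln 0 = 0 as in the convention.\<close>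
definition entropy :: "(nat \<Rightarrow> real) \<Rightarrow> ennreal" where
  "entropy p = (\<Sum>i. ennreal (- (p i * ln (p i))))"

end

theory Submission
  imports Defs
begin

text \<open>Write \<open>p = s q\<close> with \<open>1 - c \<le> s \<le> 1 + c\<close>. Then
  \<open>-p ln p = s (-q ln q) + q (-s ln s)\<close>; the first term is at most \<open>(1 + c) (-q ln q)\<close>,
  and \<open>-s ln s \<le> 1 - s \<le> c\<close>. Summing over \<open>i\<close> gives
  \<open>H(p) \<le> (1 + c) H(q) + c\<close>, and \<open>c \<le> c ln 3\<close>.\<close>

lemma sums_nonneg_term_le:
  fixes f :: "nat \<Rightarrow> real"
  assumes "f sums s" and "\<And>n. 0 \<le> f n"
  shows "f i \<le> s"
proof -
  have "f i = sum f {i}" by simp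
  also have "\<dots> \<le> suminf f"
    using assms by (intro sum_le_suminf) (auto simp: sums_summable)
  finally show ?thesis using assms(1) sums_unique by fastforce
qed

lemma neg_mult_ln_nonneg:
  fixes x :: real
  assumes "0 \<le> x" and "x \<le> 1"
  shows "0 \<le> - (x * ln x)"
  using assms by (cases "x = 0") (auto simp: mult_nonneg_nonpos)

lemma neg_mult_ln_le_one_minus:
  fixes s :: real
  assumes "0 \<le> s"
  shows "- (s * ln s) \<le> 1 - s"
proof (cases "s = 0")
  case False
  then have "0 < s" using assms by simp
  have "- ln s \<le> 1 / s - 1"
    using ln_le_minus_one[of "1 / s"] \<open>0 < s\<close> by (simp add: ln_div)
  then have "s * (- ln s) \<le> s * (1 / s - 1)"
    using \<open>0 < s\<close> by (intro mult_left_mono) auto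
  then show ?thesis using \<open>0 < s\<close> by (simp add: algebra_simps)
qed simp

lemma neg_mult_ln_relative_perturbation:
  fixes p q c :: real
  assumes "0 \<le> p" and "0 \<le> q" and "q \<le> 1" and "\<bar>p - q\<bar> \<le> c * q"
  shows "- (p * ln p) \<le> (1 + c) * (- (q * ln q)) + c * q"
proof (cases "q = 0")
  case False
  then have "0 < q" using assms(2) by simp
  define s where "s = p / q"
  have p_eq: "p = s * q" and "0 \<le> s"
    using \<open>0 < q\<close> assms(1) by (auto simp: s_def)
  have "s * q \<le> (1 + c) * q" and "(1 - c) * q \<le> s * q"
    using assms(4) p_eq by (auto simp: abs_le_iff algebra_simps)
  then have s_le: "s \<le> 1 + c" and s_ge: "1 - c \<le> s"
    using \<open>0 < q\<close> by auto
  have "- (p * ln p) = s * (- (q * ln q)) + q * (- (s * ln s))"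
  proof (cases "s = 0")
    case False
    then show ?thesis using p_eq \<open>0 < q\<close> \<open>0 \<le> s\<close> by (simp add: ln_mult algebra_simps)
  qed (simp add: p_eq)
  also have "\<dots> \<le> (1 + c) * (- (q * ln q)) + q * (1 - s)"
    using s_le neg_mult_ln_nonneg[OF assms(2,3)] neg_mult_ln_le_one_minus[OF \<open>0 \<le> s\<close>] assms(2)
    by (intro add_mono mult_right_mono mult_left_mono) auto
  also have "\<dots> \<le> (1 + c) * (- (q * ln q)) + c * q"
    using s_ge assms(2) mult_right_mono[of "1 - s" c q] by (simp add: algebra_simps)
  finally show ?thesis .
next
  case True
  then have "p = 0" using assms(1,4) by simp
  then show ?thesis using True by simp
qed

lemma ennreal_mult_plus:
  assumes "0 \<le> a" and "0 \<le> x" and "0 \<le> y"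
  shows "ennreal (a * x + y) = ennreal a * ennreal x + ennreal y"
  by (simp only: ennreal_plus[OF mult_nonneg_nonneg[OF assms(1,2)] assms(3)] ennreal_mult[OF assms(1,2)])

lemma entropy_relative_perturbation:
  fixes p q :: "nat \<Rightarrow> real" and c :: real
  assumes "\<And>i. 0 \<le> p i" and "\<And>i. 0 \<le> q i" and "q sums 1" and "0 \<le> c"
    and "\<And>i. \<bar>p i - q i\<bar> \<le> c * q i"
  shows "entropy p \<le> ennreal (1 + c) * entropy q + ennreal c"
proof -
  have q_le_1: "q i \<le> 1" for i
    using sums_nonneg_term_le[OF assms(3,2)] .
  have term_le: "ennreal (- (p i * ln (p i)))
      \<le> ennreal (1 + c) * ennreal (- (q i * ln (q i))) + ennreal (c * q i)" for i
  proof -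
    have "0 \<le> - (q i * ln (q i))" by (intro neg_mult_ln_nonneg assms q_le_1)
    then have "ennreal ((1 + c) * (- (q i * ln (q i))) + c * q i)
        = ennreal (1 + c) * ennreal (- (q i * ln (q i))) + ennreal (c * q i)"
      using assms(2) \<open>0 \<le> c\<close> by (intro ennreal_mult_plus) auto
    moreover have "- (p i * ln (p i)) \<le> (1 + c) * (- (q i * ln (q i))) + c * q i"
      by (intro neg_mult_ln_relative_perturbation assms q_le_1)
    ultimately show ?thesis by (metis ennreal_leI)
  qed
  have "entropy p \<le> (\<Sum>i. ennreal (1 + c) * ennreal (- (q i * ln (q i))) + ennreal (c * q i))"
    unfolding entropy_def by (intro suminf_le term_le) auto
  also have "\<dots> = (\<Sum>i. ennreal (1 + c) * ennreal (- (q i * ln (q i)))) + (\<Sum>i. ennreal (c * q i))"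
    by (rule suminf_add[symmetric]) auto
  also have "(\<Sum>i. ennreal (1 + c) * ennreal (- (q i * ln (q i)))) = ennreal (1 + c) * entropy q"
    unfolding entropy_def by (rule ennreal_suminf_cmult)
  also have "(\<Sum>i. ennreal (c * q i)) = ennreal c"
  proof (rule suminf_ennreal_eq)
    show "(\<lambda>i. c * q i) sums c" using sums_mult[OF assms(3), of c] by simp
  qed (use assms(2) \<open>0 \<le> c\<close> in simp)
  finally show ?thesis .
qed

theorem lemma1:
  fixes p q :: "nat \<Rightarrow> real" and c :: real
  assumes "\<And>i. p i \<ge> 0" and "\<And>i. q i \<ge> 0"
    and "p sums 1" and "q sums 1"
    and "0 < c" and "c < 1/3"
    and "\<And>i. \<bar>p i - q i\<bar> \<le> c * q i"
  shows "entropy p \<le> ennreal (1 + c) * entropy q + ennreal (c * ln 3)"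
proof -
  have "entropy p \<le> ennreal (1 + c) * entropy q + ennreal c"
    using assms by (intro entropy_relative_perturbation) auto
  also have "c \<le> c * ln 3"
    using \<open>0 < c\<close> ln_ge_iff[of 3 1] exp_le by simp
  then have "ennreal c \<le> ennreal (c * ln 3)" by (rule ennreal_leI)
  finally show ?thesis by (simp add: add_left_mono)
qed

end
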